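(* In the perishable-goods model described in the context, let $\hat v_1,\hat v_2,\dots$ and $K^*$ be defined as in the context, as functions of the parameters $(c,\lambda,\mu)$. Then for each $k\in\{2,\dots,K^*\}$, the threshold $\hat v_k$ is strictly increasing in $c$, strictly increasing in $\lambda$, and strictly decreasing in $\mu$. The threshold $\hat v_1$ (when $K^*\ge1$) is strictly increasing in $c$, strictly decreasing in $\mu$, and independent of $\lambda$.
   Context: Goods arrive by a Poisson process with rate $\mu>0$, buyers by an independent Poisson process with rate $\lambda>0$, buyer values are i.i.d. from $F$ on $[0,1]$ with density $f>0$, $f$ absolutely continuous, and $J(v)=v-\frac{1-F(v)}{f(v)}$ strictly increasing with $J(0)<0$; $c>0$ is the buyers' per-unit-time waiting cost. Let $\rho(v):=\lambda[1-F(v)]/\mu$. The thresholds (which are the admission thresholds of the revenue-optimal policy, under which a buyer ranked $k$-th in the queue is kept iff his value is at least $\hat v_k$) are defined recursively: $\hat v_1=J^{-1}(c/\mu)$ if $c/\mu<1$ and $\hat v_1=1$ otherwise; for $k\ge2$, if $\hat v_{k-1}<1$ and $\mu\int_{\hat v_{k-1}}^{1}\frac{J'(v)}{1+\rho(v)+\dots+\rho(v)^{k-1}}dv\ge c$, then $\hat v_k$ is the unique $x\in(\hat v_{k-1},1]$ with $\mu\int_{\hat v_{k-1}}^{x}\frac{J'(v)}{1+\rho(v)+\dots+\rho(v)^{k-1}}dv=c$; otherwise $\hat v_k=1$. $K^*$ is the number of indices $k$ with $\hat v_k<1$. Monotonicity in a parameter is understood while the other two parameters are held fixed and on parameter values for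 which the relevant index $k$ satisfies $k\le K^*$. *)

theory Defs
  imports "HOL-Analysis.Analysis"
begin

definition abs_continuous_on_interval :: "real \<Rightarrow> real \<Rightarrow> (real \<Rightarrow> real) \<Rightarrow> bool" where
  "abs_continuous_on_interval a b g \<longleftrightarrow>
     (\<forall>e>0. \<exists>d>0. \<forall>(n::nat) (u::nat \<Rightarrow> real) (v::nat \<Rightarrow> real).
        (\<forall>i<n. a \<le> u i \<and> u i \<le> v i \<and> v i \<le> b) \<and>
        (\<forall>i<n. \<forall>j<n. i \<noteq> j \<longrightarrow> v i \<le> u j \<or> v j \<le> u i) \<and>
        (\<Sum>i<n. v i - u i) < d
        \<longrightarrow> (\<Sum>i<n. \<bar>g (v i) - g (u i)\<bar>) < e)"

definition Jfun :: "(real \<Rightarrow> real) \<Rightarrow> (real \<Rightarrow> real) \<Rightarrow> real \<Rightarrow> real" where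
  "Jfun F f v = v - (1 - F v) / f v"

definition rho :: "(real \<Rightarrow> real) \<Rightarrow> real \<Rightarrow> real \<Rightarrow> real \<Rightarrow> real" where
  "rho F lam mu v = lam * (1 - F v) / mu"

definition Ssum :: "(real \<Rightarrow> real) \<Rightarrow> real \<Rightarrow> real \<Rightarrow> nat \<Rightarrow> real \<Rightarrow> real" where
  "Ssum F lam mu k v = (\<Sum>i<k. (rho F lam mu v) ^ i)"

text \<open>Thresholds hat v_k, k = 1, 2, ...; the arguments are F, f, Jd (= J', the
  a.e. derivative of J), and the parameters c, lambda, mu.  Index 0 is unused
  (set to 1 by convention).\<close>
fun vhat :: "(real \<Rightarrow> real) \<Rightarrow> (real \<Rightarrow> real) \<Rightarrow> (real \<Rightarrow> real) \<Rightarrow> real \<Rightarrow> real \<Rightarrow> real \<Rightarrow> nat \<Rightarrow> real" where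
  "vhat F f Jd c lam mu 0 = 1"
| "vhat F f Jd c lam mu (Suc 0) =
     (if c / mu < 1 then (THE x. x \<in> {0..1} \<and> Jfun F f x = c / mu) else 1)"
| "vhat F f Jd c lam mu (Suc (Suc k)) =
     (let a = vhat F f Jd c lam mu (Suc k);
          h = (\<lambda>v. Jd v / Ssum F lam mu (Suc (Suc k)) v)
      in if a < 1 \<and> mu * integral {a..1} h \<ge> c
         then (THE x. x \<in> {a<..1} \<and> mu * integral {a..x} h = c)
         else 1)"

definition Kstar :: "(real \<Rightarrow> real) \<Rightarrow> (real \<Rightarrow> real) \<Rightarrow> (real \<Rightarrow> real) \<Rightarrow> real \<Rightarrow> real \<Rightarrow> real \<Rightarrow> nat" where
  "Kstar F f Jd c lam mu = card {k. 1 \<le> k \<and> vhat F f Jd c lam mu k < 1}"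

end

theory Submission
  imports Defs
begin

(*
  The thresholds depend on (c, lambda, mu) only through c/mu and lambda/mu: hat v_1 solves
  J(v) = c/mu, and hat v_k is the point where the integral of J'/(1 + rho + ... + rho^(k-1)),
  started at hat v_(k-1), reaches the level c/mu, where rho = (lambda/mu)(1 - F).  Raising c/mu
  raises the level and raising lambda/mu lowers the integrand, so by induction on k every
  threshold moves up; for k >= 2 a strict increase of lambda/mu strictly lowers the integrand
  wherever F < 1, which makes the increase strict.  The analytic input is that the monotone,
  absolutely continuous function J is the integral of its a.e. derivative J'; this follows from
  the change of variables formula together with Luzin's property (N).
*)

section \<open>Absolutely continuous functions\<close>

lemma abs_continuous_on_intervalE:
  assumes "abs_continuous_on_interval a b g" "e > 0"
  obtains d where "d > 0"
    "\<And>(n::nat) u v. \<forall>i<n. a \<le> u i \<and> u i \<le> v i \<and> v i \<le> b \<Longrightarrow>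
       \<forall>i<n. \<forall>j<n. i \<noteq> j \<longrightarrow> v i \<le> u j \<or> v j \<le> u i \<Longrightarrow>
       (\<Sum>i<n. v i - u i) < d \<Longrightarrow> (\<Sum>i<n. \<bar>g (v i) - g (u i)\<bar>) < e"
proof -
  obtain d where "d > 0" and d: "\<forall>(n::nat) u v. (\<forall>i<n. a \<le> u i \<and> u i \<le> v i \<and> v i \<le> b) \<and>
        (\<forall>i<n. \<forall>j<n. i \<noteq> j \<longrightarrow> v i \<le> u j \<or> v j \<le> u i) \<and> (\<Sum>i<n. v i - u i) < d
        \<longrightarrow> (\<Sum>i<n. \<bar>g (v i) - g (u i)\<bar>) < e"
    using assms unfolding abs_continuous_on_interval_def by blast
  show ?thesis
    using that[OF \<open>d > 0\<close>] d by blast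
qed

lemma abs_continuous_on_interval_finite_familyE:
  assumes "abs_continuous_on_interval a b g" "e > 0"
  obtains d where "d > 0"
    "\<And>(I :: 'i set) u v. finite I \<Longrightarrow> \<forall>i\<in>I. a \<le> u i \<and> u i \<le> v i \<and> v i \<le> b \<Longrightarrow>
       \<forall>i\<in>I. \<forall>j\<in>I. i \<noteq> j \<longrightarrow> v i \<le> u j \<or> v j \<le> u i \<Longrightarrow>
       (\<Sum>i\<in>I. v i - u i) < d \<Longrightarrow> (\<Sum>i\<in>I. \<bar>g (v i) - g (u i)\<bar>) < e"
proof -
  obtain d where "d > 0" and d: "\<And>(n::nat) u v. \<forall>i<n. a \<le> u i \<and> u i \<le> v i \<and> v i \<le> b \<Longrightarrow>
       \<forall>i<n. \<forall>j<n. i \<noteq> j \<longrightarrow> v i \<le> u j \<or> v j \<le> u i \<Longrightarrow>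
       (\<Sum>i<n. v i - u i) < d \<Longrightarrow> (\<Sum>i<n. \<bar>g (v i) - g (u i)\<bar>) < e"
    using abs_continuous_on_intervalE[OF assms] by blast
  show ?thesis
  proof (rule that[OF \<open>d > 0\<close>])
    fix I :: "'i set" and u v
    assume I: "finite I" and uv: "\<forall>i\<in>I. a \<le> u i \<and> u i \<le> v i \<and> v i \<le> b"
      and disj: "\<forall>i\<in>I. \<forall>j\<in>I. i \<noteq> j \<longrightarrow> v i \<le> u j \<or> v j \<le> u i"
      and small: "(\<Sum>i\<in>I. v i - u i) < d"
    obtain h where h: "bij_betw h {..<card I} I"
      using ex_bij_betw_nat_finite[OF I] lessThan_atLeast0 by metis
    have reindex: "(\<Sum>i<card I. G (h i)) = (\<Sum>i\<in>I. G i)" for G :: "'i \<Rightarrow> real"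
      using sum.reindex_bij_betw[OF h] by simp
    have "(\<Sum>i<card I. \<bar>g ((v \<circ> h) i) - g ((u \<circ> h) i)\<bar>) < e"
    proof (rule d)
      show "\<forall>i<card I. a \<le> (u \<circ> h) i \<and> (u \<circ> h) i \<le> (v \<circ> h) i \<and> (v \<circ> h) i \<le> b"
        using uv bij_betwE[OF h] by auto
      show "\<forall>i<card I. \<forall>j<card I. i \<noteq> j \<longrightarrow> (v \<circ> h) i \<le> (u \<circ> h) j \<or> (v \<circ> h) j \<le> (u \<circ> h) i"
      proof (intro allI impI)
        fix i j
        assume "i < card I" "j < card I" "i \<noteq> j"
        then have "h i \<in> I" "h j \<in> I" "h i \<noteq> h j"
          using bij_betwE[OF h] inj_onD[OF bij_betw_imp_inj_on[OF h]] by auto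
        then show "(v \<circ> h) i \<le> (u \<circ> h) j \<or> (v \<circ> h) j \<le> (u \<circ> h) i"
          using disj by simp
      qed
      show "(\<Sum>i<card I. (v \<circ> h) i - (u \<circ> h) i) < d"
        using small reindex[of "\<lambda>i. v i - u i"] by simp
    qed
    then show "(\<Sum>i\<in>I. \<bar>g (v i) - g (u i)\<bar>) < e"
      using reindex[of "\<lambda>i. \<bar>g (v i) - g (u i)\<bar>"] by simp
  qed
qed

lemma abs_continuous_on_interval_subset:
  assumes "abs_continuous_on_interval a b g" "a \<le> c" "d \<le> b"
  shows "abs_continuous_on_interval c d g"
  unfolding abs_continuous_on_interval_def
proof (intro allI impI)
  fix e :: real
  assume "e > 0"
  then obtain \<delta> where "\<delta> > 0" and \<delta>: "\<And>(n::nat) u v. \<forall>i<n. a \<le> u i \<and> u i \<le> v i \<and> v i \<le> b \<Longrightarrow>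
       \<forall>i<n. \<forall>j<n. i \<noteq> j \<longrightarrow> v i \<le> u j \<or> v j \<le> u i \<Longrightarrow>
       (\<Sum>i<n. v i - u i) < \<delta> \<Longrightarrow> (\<Sum>i<n. \<bar>g (v i) - g (u i)\<bar>) < e"
    using abs_continuous_on_intervalE[OF assms(1)] by blast
  show "\<exists>\<delta>>0. \<forall>(n::nat) u v. (\<forall>i<n. c \<le> u i \<and> u i \<le> v i \<and> v i \<le> d) \<and>
        (\<forall>i<n. \<forall>j<n. i \<noteq> j \<longrightarrow> v i \<le> u j \<or> v j \<le> u i) \<and> (\<Sum>i<n. v i - u i) < \<delta>
        \<longrightarrow> (\<Sum>i<n. \<bar>g (v i) - g (u i)\<bar>) < e"
  proof (intro exI[of _ \<delta>] conjI allI impI)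
    fix n :: nat and u v :: "nat \<Rightarrow> real"
    assume H: "(\<forall>i<n. c \<le> u i \<and> u i \<le> v i \<and> v i \<le> d) \<and>
        (\<forall>i<n. \<forall>j<n. i \<noteq> j \<longrightarrow> v i \<le> u j \<or> v j \<le> u i) \<and> (\<Sum>i<n. v i - u i) < \<delta>"
    then have "\<forall>i<n. a \<le> u i \<and> u i \<le> v i \<and> v i \<le> b"
      using assms(2,3) by auto
    then show "(\<Sum>i<n. \<bar>g (v i) - g (u i)\<bar>) < e"
      using \<delta> H by blast
  qed fact
qed

lemma abs_continuous_on_interval_imp_continuous_on:
  assumes "abs_continuous_on_interval a b g"
  shows "continuous_on {a..b} g"
  unfolding continuous_on_iff
proof (intro ballI allI impI)
  fix x e :: real
  assume x: "x \<in> {a..b}" and "e > 0"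
  obtain d where "d > 0" and d: "\<And>(n::nat) u v. \<forall>i<n. a \<le> u i \<and> u i \<le> v i \<and> v i \<le> b \<Longrightarrow>
       \<forall>i<n. \<forall>j<n. i \<noteq> j \<longrightarrow> v i \<le> u j \<or> v j \<le> u i \<Longrightarrow>
       (\<Sum>i<n. v i - u i) < d \<Longrightarrow> (\<Sum>i<n. \<bar>g (v i) - g (u i)\<bar>) < e"
    using abs_continuous_on_intervalE[OF assms \<open>e > 0\<close>] by blast
  have "dist (g y) (g x) < e" if "y \<in> {a..b}" "dist y x < d" for y
    using d[of 1 "\<lambda>_. min x y" "\<lambda>_. max x y"] x that
    by (cases "x \<le> y") (auto simp: dist_real_def abs_minus_commute)
  then show "\<exists>d>0. \<forall>y\<in>{a..b}. dist y x < d \<longrightarrow> dist (g y) (g x) < e"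
    using \<open>d > 0\<close> by blast
qed

lemma abs_continuous_on_interval_dominated:
  assumes g: "abs_continuous_on_interval a b g" and "0 \<le> A" "0 \<le> B"
    and dom: "\<And>x y. x \<in> {a..b} \<Longrightarrow> y \<in> {a..b} \<Longrightarrow>
      \<bar>\<phi> y - \<phi> x\<bar> \<le> A * \<bar>y - x\<bar> + B * \<bar>g y - g x\<bar>"
  shows "abs_continuous_on_interval a b \<phi>"
  unfolding abs_continuous_on_interval_def
proof (intro allI impI)
  fix e :: real
  assume "e > 0"
  then have "e / (2 * (B + 1)) > 0"
    using \<open>0 \<le> B\<close> by (intro divide_pos_pos) auto
  then obtain \<delta> where "\<delta> > 0" and \<delta>: "\<And>(n::nat) u v. \<forall>i<n. a \<le> u i \<and> u i \<le> v i \<and> v i \<le> b \<Longrightarrow>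
       \<forall>i<n. \<forall>j<n. i \<noteq> j \<longrightarrow> v i \<le> u j \<or> v j \<le> u i \<Longrightarrow>
       (\<Sum>i<n. v i - u i) < \<delta> \<Longrightarrow> (\<Sum>i<n. \<bar>g (v i) - g (u i)\<bar>) < e / (2 * (B + 1))"
    using abs_continuous_on_intervalE[OF g] by blast
  define \<delta>' where "\<delta>' = min \<delta> (e / (2 * (A + 1)))"
  show "\<exists>\<delta>>0. \<forall>(n::nat) u v. (\<forall>i<n. a \<le> u i \<and> u i \<le> v i \<and> v i \<le> b) \<and>
        (\<forall>i<n. \<forall>j<n. i \<noteq> j \<longrightarrow> v i \<le> u j \<or> v j \<le> u i) \<and> (\<Sum>i<n. v i - u i) < \<delta>
        \<longrightarrow> (\<Sum>i<n. \<bar>\<phi> (v i) - \<phi> (u i)\<bar>) < e"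
  proof (intro exI[of _ \<delta>'] conjI allI impI)
    show "\<delta>' > 0"
      using \<open>\<delta> > 0\<close> \<open>e > 0\<close> \<open>0 \<le> A\<close> by (simp add: \<delta>'_def)
    fix n :: nat and u v :: "nat \<Rightarrow> real"
    assume uv: "(\<forall>i<n. a \<le> u i \<and> u i \<le> v i \<and> v i \<le> b) \<and>
        (\<forall>i<n. \<forall>j<n. i \<noteq> j \<longrightarrow> v i \<le> u j \<or> v j \<le> u i) \<and> (\<Sum>i<n. v i - u i) < \<delta>'"
    then have length: "(\<Sum>i<n. v i - u i) \<le> e / (2 * (A + 1))"
      by (simp add: \<delta>'_def)
    have variation: "(\<Sum>i<n. \<bar>g (v i) - g (u i)\<bar>) \<le> e / (2 * (B + 1))"
      using \<delta>[of n u v] uv by (simp add: \<delta>'_def)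
    have "(\<Sum>i<n. \<bar>\<phi> (v i) - \<phi> (u i)\<bar>) \<le> (\<Sum>i<n. A * (v i - u i) + B * \<bar>g (v i) - g (u i)\<bar>)"
    proof (rule sum_mono)
      fix i
      assume "i \<in> {..<n}"
      then have "u i \<in> {a..b}" "v i \<in> {a..b}" "u i \<le> v i"
        using uv by auto
      then show "\<bar>\<phi> (v i) - \<phi> (u i)\<bar> \<le> A * (v i - u i) + B * \<bar>g (v i) - g (u i)\<bar>"
        using dom[of "u i" "v i"] by simp
    qed
    also have "\<dots> = A * (\<Sum>i<n. v i - u i) + B * (\<Sum>i<n. \<bar>g (v i) - g (u i)\<bar>)"
      by (simp add: sum.distrib sum_distrib_left)
    also have "\<dots> \<le> A * (e / (2 * (A + 1))) + B * (e / (2 * (B + 1)))"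
      using length variation \<open>0 \<le> A\<close> \<open>0 \<le> B\<close> by (intro add_mono mult_left_mono)
    also have "\<dots> < e / 2 + e / 2"
      using \<open>e > 0\<close> \<open>0 \<le> A\<close> \<open>0 \<le> B\<close> by (intro add_strict_mono) (simp_all add: field_simps)
    finally show "(\<Sum>i<n. \<bar>\<phi> (v i) - \<phi> (u i)\<bar>) < e"
      by simp
  qed
qed

lemma greaterThanLessThan_disjoint_real:
  fixes c1 d1 c2 d2 :: real
  assumes "c1 < d1" "c2 < d2" "{c1<..<d1} \<inter> {c2<..<d2} = {}"
  shows "d1 \<le> c2 \<or> d2 \<le> c1"
proof (rule ccontr)
  assume "\<not> ?thesis"
  then have "(max c1 c2 + min d1 d2) / 2 \<in> {c1<..<d1} \<inter> {c2<..<d2}"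
    using assms by auto
  then show False
    using assms(3) by blast
qed

lemma abs_continuous_on_interval_divisionE:
  assumes "abs_continuous_on_interval a b g" "e > 0"
  obtains d where "d > 0"
    "\<And>I S. I division_of S \<Longrightarrow> S \<subseteq> {a..b} \<Longrightarrow> \<forall>K\<in>I. interior K \<noteq> {} \<Longrightarrow>
       measure lebesgue S < d \<Longrightarrow> (\<Sum>K\<in>I. \<bar>g (Sup K) - g (Inf K)\<bar>) < e"
proof -
  obtain d where "d > 0" and d: "\<And>(I :: real set set) u v. finite I \<Longrightarrow>
       \<forall>i\<in>I. a \<le> u i \<and> u i \<le> v i \<and> v i \<le> b \<Longrightarrow>
       \<forall>i\<in>I. \<forall>j\<in>I. i \<noteq> j \<longrightarrow> v i \<le> u j \<or> v j \<le> u i \<Longrightarrow>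
       (\<Sum>i\<in>I. v i - u i) < d \<Longrightarrow> (\<Sum>i\<in>I. \<bar>g (v i) - g (u i)\<bar>) < e"
    by (rule abs_continuous_on_interval_finite_familyE[OF assms]) (rule that)
  show ?thesis
  proof (rule that[OF \<open>d > 0\<close>])
    fix I S
    assume div: "I division_of S" and "S \<subseteq> {a..b}" and int: "\<forall>K\<in>I. interior K \<noteq> {}"
      and "measure lebesgue S < d"
    have K: "Inf K < Sup K" "{Inf K..Sup K} = K" "a \<le> Inf K" "Sup K \<le> b" if "K \<in> I" for K
    proof -
      obtain c d where "K = {c..d}"
        using division_ofD(4)[OF div \<open>K \<in> I\<close>] by auto
      moreover have "K \<subseteq> {a..b}"
        using division_ofD(2)[OF div \<open>K \<in> I\<close>] \<open>S \<subseteq> {a..b}\<close> by blast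
      ultimately show "Inf K < Sup K" "{Inf K..Sup K} = K" "a \<le> Inf K" "Sup K \<le> b"
        using int \<open>K \<in> I\<close> by auto
    qed
    have "Sup K \<le> Inf L \<or> Sup L \<le> Inf K" if "K \<in> I" "L \<in> I" "K \<noteq> L" for K L
    proof (rule greaterThanLessThan_disjoint_real)
      show "{Inf K<..<Sup K} \<inter> {Inf L<..<Sup L} = {}"
        using division_ofD(5)[OF div that] K(2)[OF that(1)] K(2)[OF that(2)]
        by (metis interior_atLeastAtMost_real)
    qed (use K that in blast)+
    moreover have "(\<Sum>K\<in>I. Sup K - Inf K) < d"
    proof -
      have "(\<Sum>K\<in>I. Sup K - Inf K) = (\<Sum>K\<in>I. measure lebesgue K)"
      proof (rule sum.cong)
        fix K
        assume "K \<in> I"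
        have "measure lebesgue {Inf K..Sup K} = Sup K - Inf K"
          using K(1)[OF \<open>K \<in> I\<close>] by simp
        then show "Sup K - Inf K = measure lebesgue K"
          using K(2)[OF \<open>K \<in> I\<close>] by simp
      qed simp
      also have "\<dots> = measure lebesgue S"
        by (rule content_division[OF div])
      finally show ?thesis
        using \<open>measure lebesgue S < d\<close> by simp
    qed
    moreover have "\<forall>K\<in>I. a \<le> Inf K \<and> Inf K \<le> Sup K \<and> Sup K \<le> b"
      using K by (meson less_imp_le)
    ultimately show "(\<Sum>K\<in>I. \<bar>g (Sup K) - g (Inf K)\<bar>) < e"
      using d[OF division_of_finite[OF div], of Inf Sup] by blast
  qed
qed

lemma abs_continuous_mono_negligible_image:
  assumes ac: "abs_continuous_on_interval a b g" and mono: "mono_on {a..b} g"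
    and N: "negligible N" "N \<subseteq> {a..b}"
  shows "negligible (g ` N)"
proof (cases "a < b")
  case False
  then have "finite N"
    using N(2) by (intro finite_subset[of N "{a}"]) auto
  then show ?thesis
    by (intro negligible_finite finite_imageI)
next
  case True
  show ?thesis
    unfolding negligible_outer_le
  proof (intro allI impI)
    fix e :: real
    assume "e > 0"
    obtain d where "d > 0" and d: "\<And>I S. I division_of S \<Longrightarrow> S \<subseteq> {a..b} \<Longrightarrow>
       \<forall>K\<in>I. interior K \<noteq> {} \<Longrightarrow>
       measure lebesgue S < d \<Longrightarrow> (\<Sum>K\<in>I. \<bar>g (Sup K) - g (Inf K)\<bar>) < e"
      by (rule abs_continuous_on_interval_divisionE[OF ac \<open>e > 0\<close>]) (rule that)
    have "N \<in> lmeasurable" "N \<subseteq> cbox a b" "d / 2 > 0"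
      using N \<open>d > 0\<close> by (simp_all add: negligible_imp_measurable)
    then obtain \<D> where "countable \<D>"
      and \<D>: "\<And>K. K \<in> \<D> \<Longrightarrow> K \<subseteq> cbox a b \<and> K \<noteq> {} \<and> (\<exists>c d. K = cbox c d)"
      and \<D>_disj: "pairwise (\<lambda>A B. interior A \<inter> interior B = {}) \<D>"
      and "\<And>u v. cbox u v \<in> \<D> \<Longrightarrow> \<exists>n. \<forall>i \<in> Basis. v \<bullet> i - u \<bullet> i = (b \<bullet> i - a \<bullet> i) / 2 ^ n"
      and \<D>_int: "\<And>K. K \<in> \<D> \<Longrightarrow> box a b \<noteq> {} \<Longrightarrow> interior K \<noteq> {}"
      and \<D>_cover: "N \<subseteq> \<Union>\<D>" and "\<Union>\<D> \<in> lmeasurable"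
      and \<D>_small: "measure lebesgue (\<Union>\<D>) \<le> measure lebesgue N + d / 2"
      by (rule measurable_outer_intervals_bounded) (rule that)
    define A where "A K = {g (Inf K)..g (Sup K)}" for K
    have cover: "g ` N \<subseteq> (\<Union>K\<in>\<D>. A K)"
    proof
      fix y
      assume "y \<in> g ` N"
      then obtain x K where "y = g x" "x \<in> N" "K \<in> \<D>" "x \<in> K"
        using \<D>_cover by auto
      moreover obtain c d where "K = {c..d}" "{c..d} \<subseteq> {a..b}"
        using \<D>[OF \<open>K \<in> \<D>\<close>] by auto
      ultimately have "g (Inf K) \<le> g x \<and> g x \<le> g (Sup K)"
        using N(2) by (auto intro!: mono_onD[OF mono])
      then show "y \<in> (\<Union>K\<in>\<D>. A K)"
        using \<open>K \<in> \<D>\<close> \<open>y = g x\<close> unfolding A_def by auto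
    qed
    have bound: "measure lebesgue (\<Union>K\<in>I. A K) \<le> e" if "I \<subseteq> \<D>" "finite I" for I
    proof -
      have "I division_of \<Union>I"
      proof (rule division_ofI)
        show "interior K \<inter> interior L = {}" if "K \<in> I" "L \<in> I" "K \<noteq> L" for K L
          using \<D>_disj that \<open>I \<subseteq> \<D>\<close> unfolding pairwise_def by blast
      qed (use that \<D> in auto)
      moreover have "measure lebesgue (\<Union>I) < d"
      proof -
        have "measure lebesgue (\<Union>I) \<le> measure lebesgue (\<Union>\<D>)"
          using that lmeasurable_division[OF \<open>I division_of \<Union>I\<close>] \<open>\<Union>\<D> \<in> lmeasurable\<close>
          by (intro measure_mono_fmeasurable) (auto intro: fmeasurableD)
        then show ?thesis
          using \<D>_small N \<open>d > 0\<close> by (simp add: negligible_imp_measure0)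
      qed
      ultimately have "(\<Sum>K\<in>I. \<bar>g (Sup K) - g (Inf K)\<bar>) < e"
        using that \<D> \<D>_int True by (intro d) auto
      moreover have "measure lebesgue (\<Union>K\<in>I. A K) \<le> (\<Sum>K\<in>I. measure lebesgue (A K))"
        by (rule measure_UNION_le[OF \<open>finite I\<close>]) (simp add: A_def)
      moreover have "(\<Sum>K\<in>I. measure lebesgue (A K)) \<le> (\<Sum>K\<in>I. \<bar>g (Sup K) - g (Inf K)\<bar>)"
        unfolding A_def by (intro sum_mono) simp
      ultimately show ?thesis
        by linarith
    qed
    have "A K \<in> lmeasurable" for K
      unfolding A_def by simp
    then show "\<exists>T. g ` N \<subseteq> T \<and> T \<in> lmeasurable \<and> measure lebesgue T \<le> e"
      using cover fmeasurable_UN_bound[OF \<open>countable \<D>\<close> _ bound]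
        measure_UN_bound[OF \<open>countable \<D>\<close> _ bound] by auto
  qed
qed

lemma AE_lborel_negligibleE:
  assumes "AE x in lborel. P x"
  obtains N where "negligible N" "\<And>x. x \<notin> N \<Longrightarrow> P x"
proof -
  obtain N where N: "{x \<in> space lborel. \<not> P x} \<subseteq> N" "emeasure lborel N = 0" "N \<in> sets lborel"
    by (rule AE_E[OF assms]) (rule that)
  then have "N \<in> null_sets lborel"
    by (intro null_setsI)
  then have "negligible N"
    by (simp add: negligible_iff_null_sets null_sets_completionI)
  moreover have "P x" if "x \<notin> N" for x
    using N(1) that by auto
  ultimately show ?thesis
    by (rule that)
qed

lemma integral_abs_derivative_eq_measure_image:
  fixes g g' :: "real \<Rightarrow> real"
  assumes S: "S \<in> sets lebesgue" and "bounded (g ` S)"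
    and deriv: "\<And>x. x \<in> S \<Longrightarrow> (g has_real_derivative g' x) (at x within S)"
    and inj: "inj_on g S"
  shows "g ` S \<in> lmeasurable"
    and "(\<lambda>x. \<bar>g' x\<bar>) absolutely_integrable_on S"
    and "integral S (\<lambda>x. \<bar>g' x\<bar>) = measure lebesgue (g ` S)"
proof -
  have "g differentiable_on S"
    using deriv unfolding differentiable_on_def real_differentiable_def by blast
  then have "g ` S \<in> sets lebesgue"
    using differentiable_image_in_sets_lebesgue[OF S] by simp
  then show "g ` S \<in> lmeasurable"
    using \<open>bounded (g ` S)\<close> by (rule bounded_set_imp_lmeasurable[rotated])
  then have "(\<lambda>_. 1::real) absolutely_integrable_on g ` S \<and>
      integral (g ` S) (\<lambda>_. 1::real) = measure lebesgue (g ` S)"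
    by (simp add: lmeasure_integral nonnegative_absolutely_integrable_1)
  then have "(\<lambda>x. \<bar>g' x\<bar> * 1) absolutely_integrable_on S \<and>
      integral S (\<lambda>x. \<bar>g' x\<bar> * 1) = measure lebesgue (g ` S)"
    using has_absolute_integral_change_of_variables_1'[where f = "\<lambda>_. 1", OF S deriv inj] by simp
  then show "(\<lambda>x. \<bar>g' x\<bar>) absolutely_integrable_on S"
    and "integral S (\<lambda>x. \<bar>g' x\<bar>) = measure lebesgue (g ` S)"
    by simp_all
qed

lemma measure_image_abs_continuous_mono:
  assumes ac: "abs_continuous_on_interval a b g" and mono: "mono_on {a..b} g"
    and "negligible N" "a \<le> b" and meas: "g ` ({a<..<b} - N) \<in> lmeasurable"
  shows "measure lebesgue (g ` ({a<..<b} - N)) = g b - g a"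
proof (rule antisym)
  let ?S = "{a<..<b} - N"
  have "g a \<le> g b"
    using \<open>a \<le> b\<close> by (intro mono_onD[OF mono]) auto
  have "g ` ?S \<subseteq> {g a..g b}"
    by (auto intro!: mono_onD[OF mono])
  then have "measure lebesgue (g ` ?S) \<le> measure lebesgue {g a..g b}"
    using meas by (intro measure_mono_fmeasurable) auto
  then show "measure lebesgue (g ` ?S) \<le> g b - g a"
    using \<open>g a \<le> g b\<close> by simp
  define Z where "Z = g ` (N \<inter> {a..b}) \<union> {g a, g b}"
  have "negligible (g ` (N \<inter> {a..b}))"
    by (rule abs_continuous_mono_negligible_image[OF ac mono negligible_subset[OF \<open>negligible N\<close>]]) auto
  then have "negligible Z"
    by (simp add: Z_def)
  have "{g a..g b} \<subseteq> g ` ?S \<union> Z"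
  proof
    fix y
    assume "y \<in> {g a..g b}"
    moreover have "continuous_on {a..b} g"
      by (rule abs_continuous_on_interval_imp_continuous_on[OF ac])
    ultimately obtain x where "a \<le> x" "x \<le> b" "g x = y"
      using IVT'[of g a y b] \<open>a \<le> b\<close> by auto
    then show "y \<in> g ` ?S \<union> Z"
      unfolding Z_def by (cases "x = a \<or> x = b \<or> x \<in> N") auto
  qed
  moreover have "g ` ?S \<union> Z \<in> lmeasurable"
    using meas \<open>negligible Z\<close> by (simp add: fmeasurable.Un negligible_imp_measurable)
  ultimately have "measure lebesgue {g a..g b} \<le> measure lebesgue (g ` ?S \<union> Z)"
    by (intro measure_mono_fmeasurable) auto
  then have "g b - g a \<le> measure lebesgue (g ` ?S \<union> Z)"
    using \<open>g a \<le> g b\<close> by simp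
  also have "\<dots> \<le> measure lebesgue (g ` ?S) + measure lebesgue Z"
    using meas \<open>negligible Z\<close> by (intro measure_Un_le) (auto simp: negligible_imp_sets)
  finally show "g b - g a \<le> measure lebesgue (g ` ?S)"
    using \<open>negligible Z\<close> by (simp add: negligible_imp_measure0)
qed

lemma abs_continuous_strict_mono_integral_derivative:
  fixes g g' :: "real \<Rightarrow> real"
  assumes ac: "abs_continuous_on_interval a b g" and mono: "strict_mono_on {a..b} g"
    and deriv: "AE x in lborel. x \<in> {a..b} \<longrightarrow> (g has_real_derivative g' x) (at x)"
    and "a \<le> b"
  shows "g' absolutely_integrable_on {a..b}" and "integral {a..b} g' = g b - g a"
proof -
  obtain N where "negligible N"
    and N: "\<And>x. x \<notin> N \<Longrightarrow> x \<in> {a..b} \<longrightarrow> (g has_real_derivative g' x) (at x)"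
    by (rule AE_lborel_negligibleE[OF deriv]) (rule that)
  define S where "S = {a<..<b} - N"
  have "S \<in> sets lebesgue"
    unfolding S_def using \<open>negligible N\<close> by (simp add: negligible_imp_sets sets.Diff)
  have g_mono: "mono_on {a..b} g"
    using mono by (rule strict_mono_on_imp_mono_on)
  have g_S: "g ` S \<subseteq> {g a..g b}"
    unfolding S_def using \<open>a \<le> b\<close> by (auto intro!: mono_onD[OF g_mono])
  have deriv_S: "(g has_real_derivative g' x) (at x within S)" if "x \<in> S" for x
    using N[rule_format, of x] that by (auto simp: S_def intro: has_field_derivative_at_within)
  have nonneg_S: "0 \<le> g' x" if "x \<in> S" for x
    using mono_on_imp_deriv_nonneg[OF g_mono N[rule_format, of x]] that by (auto simp: S_def)
  have "inj_on g S"
    using strict_mono_on_imp_inj_on[OF mono] by (rule inj_on_subset) (auto simp: S_def)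
  have change: "g ` S \<in> lmeasurable" "(\<lambda>x. \<bar>g' x\<bar>) absolutely_integrable_on S"
      "integral S (\<lambda>x. \<bar>g' x\<bar>) = measure lebesgue (g ` S)"
    using integral_abs_derivative_eq_measure_image[OF \<open>S \<in> sets lebesgue\<close>
        bounded_subset[OF bounded_closed_interval g_S] deriv_S \<open>inj_on g S\<close>] by simp_all
  have "negligible (N \<union> {a, b})"
    using \<open>negligible N\<close> by simp
  moreover have "{x \<in> {a..b} - S. g' x \<noteq> 0} \<subseteq> N \<union> {a, b}"
    by (auto simp: S_def)
  ultimately have spike: "negligible {x \<in> {a..b} - S. g' x \<noteq> 0}"
    by (rule negligible_subset)
  have no_spike: "{x \<in> S - {a..b}. g' x \<noteq> 0} = {}"
    by (auto simp: S_def)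
  have spike': "negligible {x \<in> S - {a..b}. g' x \<noteq> 0}"
    by (simp only: no_spike negligible_empty)
  have "g' absolutely_integrable_on S"
    by (rule absolutely_integrable_spike[OF change(2) negligible_empty]) (simp add: nonneg_S)
  moreover have "integral S g' = integral S (\<lambda>x. \<bar>g' x\<bar>)"
    by (rule integral_cong) (simp add: nonneg_S)
  moreover have "measure lebesgue (g ` S) = g b - g a"
    using measure_image_abs_continuous_mono[OF ac g_mono \<open>negligible N\<close> \<open>a \<le> b\<close>] change(1)
    by (simp add: S_def)
  ultimately show "g' absolutely_integrable_on {a..b}" and "integral {a..b} g' = g b - g a"
    using absolutely_integrable_spike_set[OF _ spike' spike] integral_spike_set[OF spike' spike]
      change(3) by auto
qed

section \<open>Integrals against continuous weights\<close>

lemma integral_nonneg_off_negligible: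
  fixes h :: "real \<Rightarrow> real"
  assumes "h integrable_on S" "negligible N" "\<And>x. x \<in> S - N \<Longrightarrow> 0 \<le> h x"
  shows "0 \<le> integral S h"
proof -
  define h' where "h' x = (if x \<in> N then 0 else h x)" for x
  have "h' integrable_on S" "integral S h' = integral S h"
    using integrable_spike[OF assms(1,2)] integral_spike[OF assms(2), of S h' h]
    by (auto simp: h'_def)
  moreover have "0 \<le> h' x" if "x \<in> S" for x
    using assms(3) that by (simp add: h'_def)
  ultimately show ?thesis
    by (metis integral_nonneg)
qed

lemma absolutely_integrable_mult_continuous:
  fixes h w :: "real \<Rightarrow> real"
  assumes h: "h absolutely_integrable_on {a..b}" and w: "continuous_on {a..b} w"
  shows "(\<lambda>x. h x * w x) absolutely_integrable_on {a..b}"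
proof -
  have "(\<lambda>x. w x * h x) absolutely_integrable_on {a..b}"
  proof (rule absolutely_integrable_bounded_measurable_product_real)
    show "w \<in> borel_measurable (lebesgue_on {a..b})"
      using w by (intro continuous_imp_measurable_on_sets_lebesgue) auto
    show "bounded (w ` {a..b})"
      using w by (intro compact_imp_bounded compact_continuous_image) auto
  qed (use h in auto)
  then show ?thesis
    by (simp add: mult.commute)
qed

lemma integral_mult_continuous_lower:
  fixes h w :: "real \<Rightarrow> real"
  assumes h: "h absolutely_integrable_on {a..b}"
    and "negligible N" and h_nonneg: "\<And>x. x \<in> {a..b} - N \<Longrightarrow> 0 \<le> h x"
    and w: "continuous_on {a..b} w" and lower: "\<And>x. x \<in> {a..b} \<Longrightarrow> \<alpha> \<le> w x"
  shows "\<alpha> * integral {a..b} h \<le> integral {a..b} (\<lambda>x. h x * w x)"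
proof -
  have hw: "(\<lambda>x. h x * w x) integrable_on {a..b}"
    using absolutely_integrable_mult_continuous[OF h w] by (rule set_lebesgue_integral_eq_integral)
  have "h integrable_on {a..b}"
    using h by (rule set_lebesgue_integral_eq_integral)
  then have h\<alpha>: "(\<lambda>x. h x * \<alpha>) integrable_on {a..b}"
    by (rule integrable_on_mult_left)
  have "0 \<le> integral {a..b} (\<lambda>x. h x * w x - h x * \<alpha>)"
    using hw h\<alpha> \<open>negligible N\<close>
  proof (rule integral_nonneg_off_negligible[OF integrable_diff])
    show "0 \<le> h x * w x - h x * \<alpha>" if "x \<in> {a..b} - N" for x
      using h_nonneg[OF that] lower[of x] that
      by (simp add: mult_left_mono flip: right_diff_distrib)
  qed
  also have "\<dots> = integral {a..b} (\<lambda>x. h x * w x) - \<alpha> * integral {a..b} h"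
    using integral_diff[OF hw h\<alpha>] by (simp add: mult.commute)
  finally show ?thesis
    by simp
qed

section \<open>The thresholds\<close>

lemma strict_mono_on_continuous_ex1_preimage:
  fixes G :: "real \<Rightarrow> real"
  assumes "a \<le> b" "continuous_on {a..b} G" "strict_mono_on {a..b} G" "G a \<le> y" "y \<le> G b"
  shows "\<exists>!x. x \<in> {a..b} \<and> G x = y"
proof -
  obtain x where "x \<in> {a..b}" "G x = y"
    using IVT'[of G a y b] assms by auto
  moreover have "x' = x" if "x' \<in> {a..b}" "G x' = y" for x'
    using strict_mono_onD[OF assms(3), of x x'] strict_mono_onD[OF assms(3), of x' x] that
      \<open>x \<in> {a..b}\<close> \<open>G x = y\<close> by (cases x x' rule: linorder_cases) auto
  ultimately show ?thesis
    by blast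
qed

lemma sum_power_ge_one:
  fixes r :: real
  assumes "0 \<le> r" "1 \<le> K"
  shows "1 \<le> (\<Sum>i<K. r ^ i)"
proof -
  have "(\<Sum>i\<in>{0}. r ^ i) \<le> (\<Sum>i<K. r ^ i)"
    using assms by (intro sum_mono2) auto
  then show ?thesis
    by simp
qed

lemma sum_power_mono:
  fixes r s :: real
  assumes "0 \<le> r" "r \<le> s"
  shows "(\<Sum>i<K. r ^ i) \<le> (\<Sum>i<K. s ^ i)"
  using assms by (intro sum_mono power_mono) auto

lemma sum_power_strict_mono:
  fixes r s :: real
  assumes "0 \<le> r" "r < s" "2 \<le> K"
  shows "(\<Sum>i<K. r ^ i) < (\<Sum>i<K. s ^ i)"
proof (rule sum_strict_mono_ex1)
  show "\<forall>i\<in>{..<K}. r ^ i \<le> s ^ i"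
    using assms by (auto intro: power_mono)
  show "\<exists>i\<in>{..<K}. r ^ i < s ^ i"
    using assms by (intro bexI[of _ 1]) auto
qed simp

lemma vhat_less_one_SucD:
  assumes "vhat F f Jd c lam mu (Suc (Suc k)) < 1"
  shows "vhat F f Jd c lam mu (Suc k) < 1"
proof (rule ccontr)
  assume "\<not> vhat F f Jd c lam mu (Suc k) < 1"
  then have "vhat F f Jd c lam mu (Suc (Suc k)) = 1"
    by (simp add: Let_def)
  with assms show False
    by simp
qed

lemma vhat_less_one_add:
  "vhat F f Jd c lam mu (Suc m + d) < 1 \<Longrightarrow> vhat F f Jd c lam mu (Suc m) < 1"
proof (induction d)
  case (Suc d)
  have "vhat F f Jd c lam mu (Suc (Suc (m + d))) < 1"
    using Suc.prems by (simp only: add_Suc_right add_Suc)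
  then have "vhat F f Jd c lam mu (Suc m + d) < 1"
    unfolding add_Suc by (rule vhat_less_one_SucD)
  then show ?case
    by (rule Suc.IH)
qed (simp only: add_0_right)

lemma vhat_less_one_le:
  assumes "1 \<le> j" "j \<le> k" "vhat F f Jd c lam mu k < 1"
  shows "vhat F f Jd c lam mu j < 1"
proof -
  obtain m where "j = Suc m"
    using assms(1) by (cases j) auto
  moreover have "k = Suc m + (k - j)"
    using assms(2) \<open>j = Suc m\<close> by simp
  ultimately show ?thesis
    using vhat_less_one_add[of F f Jd c lam mu m "k - j"] assms(3) by simp
qed

lemma vhat_less_one_if_le_Kstar:
  assumes "1 \<le> k" "k \<le> Kstar F f Jd c lam mu"
  shows "vhat F f Jd c lam mu k < 1"
proof (rule ccontr)
  assume k: "\<not> vhat F f Jd c lam mu k < 1"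
  have "j < k" if "1 \<le> j" "vhat F f Jd c lam mu j < 1" for j
  proof (rule ccontr)
    assume "\<not> j < k"
    then show False
      using vhat_less_one_le[OF assms(1) _ that(2)] k by simp
  qed
  then have "{j. 1 \<le> j \<and> vhat F f Jd c lam mu j < 1} \<subseteq> {1..<k}"
    by auto
  then have "Kstar F f Jd c lam mu \<le> k - 1"
    unfolding Kstar_def using card_mono[of "{1..<k}"] by fastforce
  then show False
    using assms by linarith
qed

locale regular_value_distribution =
  fixes F f Jd :: "real \<Rightarrow> real"
  assumes F0: "F 0 = 0" and F1: "F 1 = 1"
    and dens: "\<forall>x\<in>{0..1}. (F has_real_derivative f x) (at x within {0..1})"
    and fpos: "\<forall>x\<in>{0..1}. f x > 0"
    and fac: "abs_continuous_on_interval 0 1 f"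
    and Jmono: "strict_mono_on {0..1} (Jfun F f)"
    and J0: "Jfun F f 0 < 0"
    and Jd: "AE x in lborel. x \<in> {0..1} \<longrightarrow> (Jfun F f has_real_derivative Jd x) (at x)"
begin

lemma F_continuous: "continuous_on {0..1} F"
  using dens DERIV_continuous continuous_on_eq_continuous_within by blast

lemma F_strict_mono: "strict_mono_on {0..1} F"
proof (rule strict_mono_onI)
  fix x y :: real
  assume "x \<in> {0..1}" "y \<in> {0..1}" "x < y"
  show "F x < F y"
  proof (rule DERIV_pos_imp_increasing_open[OF \<open>x < y\<close>])
    fix z
    assume "x < z" "z < y"
    then have "0 < z" "z < 1"
      using \<open>x \<in> {0..1}\<close> \<open>y \<in> {0..1}\<close> by auto
    then have "(F has_real_derivative f z) (at z within {0..1})"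
      using dens by simp
    then have "(F has_real_derivative f z) (at z)"
      using at_within_Icc_at[of 0 z 1] \<open>0 < z\<close> \<open>z < 1\<close> by simp
    then show "\<exists>d. (F has_real_derivative d) (at z) \<and> 0 < d"
      using fpos \<open>x < z\<close> \<open>z < y\<close> \<open>x \<in> {0..1}\<close> \<open>y \<in> {0..1}\<close> by auto
  qed (use F_continuous \<open>x \<in> {0..1}\<close> \<open>y \<in> {0..1}\<close> in \<open>auto intro: continuous_on_subset\<close>)
qed

lemma F_bounds:
  assumes "x \<in> {0..1}"
  shows "0 \<le> F x" "F x \<le> 1"
  using assms F0 F1 strict_mono_onD[OF F_strict_mono, of 0 x] strict_mono_onD[OF F_strict_mono, of x 1]
  by (cases "x = 0"; cases "x = 1"; auto)+

lemma F_less_one: "0 \<le> x \<Longrightarrow> x < 1 \<Longrightarrow> F x < 1"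
  using strict_mono_onD[OF F_strict_mono, of x 1] F1 by auto

lemma f_continuous: "continuous_on {0..1} f"
  by (rule abs_continuous_on_interval_imp_continuous_on[OF fac])

lemma f_bounds:
  obtains m M where "m > 0" "\<And>x. x \<in> {0..1} \<Longrightarrow> m \<le> f x \<and> f x \<le> M"
proof -
  obtain x0 where "x0 \<in> {0..1}" "\<forall>y\<in>{0..1}. f x0 \<le> f y"
    using continuous_attains_inf[OF compact_Icc _ f_continuous] by auto
  moreover obtain x1 where "x1 \<in> {0..1}" "\<forall>y\<in>{0..1}. f y \<le> f x1"
    using continuous_attains_sup[OF compact_Icc _ f_continuous] by auto
  ultimately show ?thesis
    using fpos that[of "f x0" "f x1"] by auto
qed

lemma F_lipschitz:
  assumes "x \<in> {0..1}" "y \<in> {0..1}" "\<And>z. z \<in> {0..1} \<Longrightarrow> f z \<le> M"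
  shows "\<bar>F y - F x\<bar> \<le> M * \<bar>y - x\<bar>"
  using field_differentiable_bound[of "{0..1}" F f M y x] dens fpos assms by fastforce

lemma J_difference_bound:
  assumes x: "x \<in> {0..1}" and y: "y \<in> {0..1}"
    and "m > 0" and mM: "\<And>z. z \<in> {0..1} \<Longrightarrow> m \<le> f z \<and> f z \<le> M"
  shows "\<bar>Jfun F f y - Jfun F f x\<bar> \<le> (1 + M / m) * \<bar>y - x\<bar> + 1 / m\<^sup>2 * \<bar>f y - f x\<bar>"
proof -
  have fx: "m \<le> f x" and fy: "m \<le> f y"
    using mM x y by auto
  define P where "P = (F x - F y) / f y"
  define Q where "Q = (1 - F x) * (1 / f y - 1 / f x)"
  have "Jfun F f y - Jfun F f x = (y - x) - (P + Q)"
    unfolding Jfun_def P_def Q_def using fx fy \<open>m > 0\<close> by (simp add: field_simps)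
  moreover have "\<bar>P\<bar> \<le> M / m * \<bar>y - x\<bar>"
  proof -
    have "\<bar>P\<bar> = \<bar>F y - F x\<bar> / f y"
      using fy \<open>m > 0\<close> by (simp add: P_def abs_minus_commute)
    also have "\<dots> \<le> M * \<bar>y - x\<bar> / m"
      using F_lipschitz[OF x y, of M] mM fy \<open>m > 0\<close>
      by (intro frac_le) auto
    finally show ?thesis
      by simp
  qed
  moreover have "\<bar>Q\<bar> \<le> 1 / m\<^sup>2 * \<bar>f y - f x\<bar>"
  proof -
    have "\<bar>1 / f y - 1 / f x\<bar> = \<bar>f y - f x\<bar> / (f x * f y)"
      using fx fy \<open>m > 0\<close> by (simp add: field_simps abs_minus_commute)
    also have "\<dots> \<le> \<bar>f y - f x\<bar> / m\<^sup>2"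
      using fx fy \<open>m > 0\<close> by (intro divide_left_mono) (auto simp: power2_eq_square mult_mono)
    finally have "\<bar>1 / f y - 1 / f x\<bar> \<le> \<bar>f y - f x\<bar> / m\<^sup>2" .
    moreover have "\<bar>Q\<bar> \<le> \<bar>1 / f y - 1 / f x\<bar>"
      using F_bounds[OF x] by (simp add: Q_def abs_mult mult_left_le_one_le)
    ultimately show ?thesis
      by simp
  qed
  ultimately show ?thesis
    by (simp add: algebra_simps)
qed

lemma J_abs_continuous: "abs_continuous_on_interval 0 1 (Jfun F f)"
proof -
  obtain m M where "m > 0" and mM: "\<And>x. x \<in> {0..1} \<Longrightarrow> m \<le> f x \<and> f x \<le> M"
    using f_bounds by blast
  moreover have "m \<le> f 0 \<and> f 0 \<le> M"
    using mM by simp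
  ultimately have "0 \<le> M"
    by linarith
  show ?thesis
    by (rule abs_continuous_on_interval_dominated[OF fac, of "1 + M / m" "1 / m\<^sup>2"])
      (use \<open>m > 0\<close> \<open>0 \<le> M\<close> J_difference_bound mM in auto)
qed

lemma J_continuous: "continuous_on {0..1} (Jfun F f)"
  by (rule abs_continuous_on_interval_imp_continuous_on[OF J_abs_continuous])

lemma J_one: "Jfun F f 1 = 1"
  using F1 by (simp add: Jfun_def)

lemma J_less_iff: "x \<in> {0..1} \<Longrightarrow> y \<in> {0..1} \<Longrightarrow> Jfun F f x < Jfun F f y \<longleftrightarrow> x < y"
  using Jmono by (metis linorder_neqE order_less_asym strict_mono_onD)

lemma Jd_nonneg:
  obtains N where "negligible N" "\<And>x. x \<in> {0..1} - N \<Longrightarrow> 0 \<le> Jd x"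
proof -
  obtain N where "negligible N"
    and N: "\<And>x. x \<notin> N \<Longrightarrow> x \<in> {0..1} \<longrightarrow> (Jfun F f has_real_derivative Jd x) (at x)"
    by (rule AE_lborel_negligibleE[OF Jd]) (rule that)
  have "0 \<le> Jd x" if "x \<in> {0..1} - (N \<union> {0, 1})" for x
    using mono_on_imp_deriv_nonneg[OF strict_mono_on_imp_mono_on[OF Jmono] N[rule_format, of x]] that
    by auto
  moreover have "negligible (N \<union> {0, 1})"
    using \<open>negligible N\<close> by simp
  ultimately show ?thesis
    using that by blast
qed

lemma integral_Jd:
  assumes "0 \<le> a" "a \<le> b" "b \<le> 1"
  shows "Jd absolutely_integrable_on {a..b}" and "integral {a..b} Jd = Jfun F f b - Jfun F f a"
proof -
  have "abs_continuous_on_interval a b (Jfun F f)"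
    using abs_continuous_on_interval_subset[OF J_abs_continuous] assms by simp
  moreover have "strict_mono_on {a..b} (Jfun F f)"
    using assms by (intro monotone_on_subset[OF Jmono]) auto
  moreover have "AE x in lborel. x \<in> {a..b} \<longrightarrow> (Jfun F f has_real_derivative Jd x) (at x)"
    using Jd by eventually_elim (use assms in auto)
  ultimately show "Jd absolutely_integrable_on {a..b}" and "integral {a..b} Jd = Jfun F f b - Jfun F f a"
    using abs_continuous_strict_mono_integral_derivative \<open>a \<le> b\<close> by blast+
qed

lemma Jd_mult_integrable:
  assumes "0 \<le> a" "a \<le> b" "b \<le> 1" "continuous_on {a..b} w"
  shows "(\<lambda>v. Jd v * w v) integrable_on {a..b}"
  using absolutely_integrable_mult_continuous[OF integral_Jd(1)[OF assms(1-3)] assms(4)]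
  by (rule set_lebesgue_integral_eq_integral)

lemma integral_Jd_mult_lower:
  assumes "0 \<le> a" "a \<le> b" "b \<le> 1" "continuous_on {a..b} w"
    and "\<And>v. v \<in> {a..b} \<Longrightarrow> \<alpha> \<le> w v"
  shows "\<alpha> * (Jfun F f b - Jfun F f a) \<le> integral {a..b} (\<lambda>v. Jd v * w v)"
proof -
  obtain N where "negligible N" "\<And>x. x \<in> {0..1} - N \<Longrightarrow> 0 \<le> Jd x"
    using Jd_nonneg by blast
  then show ?thesis
    using integral_mult_continuous_lower[OF integral_Jd(1)[OF assms(1-3)] \<open>negligible N\<close> _ assms(4,5)]
      integral_Jd(2)[OF assms(1-3)] assms(1,3) by auto
qed

lemma integral_Jd_mult_nonneg:
  assumes "0 \<le> a" "a \<le> b" "b \<le> 1" "continuous_on {a..b} w" "\<And>v. v \<in> {a..b} \<Longrightarrow> 0 \<le> w v"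
  shows "0 \<le> integral {a..b} (\<lambda>v. Jd v * w v)"
  using integral_Jd_mult_lower[OF assms(1-4), of 0] assms(5) by simp

lemma integral_Jd_mult_pos:
  assumes "0 \<le> a" "a < b" "b \<le> 1" "continuous_on {a..b} w" "\<And>v. v \<in> {a..b} \<Longrightarrow> 0 < w v"
  shows "0 < integral {a..b} (\<lambda>v. Jd v * w v)"
proof -
  obtain v0 where "v0 \<in> {a..b}" and min: "\<And>v. v \<in> {a..b} \<Longrightarrow> w v0 \<le> w v"
    using continuous_attains_inf[OF compact_Icc _ assms(4)] \<open>a < b\<close> by auto
  have "Jfun F f a < Jfun F f b"
    using J_less_iff[of a b] assms(1-3) by simp
  then have "0 < w v0 * (Jfun F f b - Jfun F f a)"
    using assms(5)[OF \<open>v0 \<in> {a..b}\<close>] by simp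
  also have "\<dots> \<le> integral {a..b} (\<lambda>v. Jd v * w v)"
    using assms(1-4) min by (intro integral_Jd_mult_lower) auto
  finally show ?thesis .
qed

lemma rho_eq: "rho F lam mu v = lam / mu * (1 - F v)"
  by (simp add: rho_def)

lemma rho_nonneg: "0 \<le> lam / mu \<Longrightarrow> v \<in> {0..1} \<Longrightarrow> 0 \<le> rho F lam mu v"
  unfolding rho_eq using F_bounds[of v] by (intro mult_nonneg_nonneg) auto

lemma rho_mono:
  "lam1 / mu1 \<le> lam2 / mu2 \<Longrightarrow> v \<in> {0..1} \<Longrightarrow> rho F lam1 mu1 v \<le> rho F lam2 mu2 v"
  unfolding rho_eq using F_bounds[of v] by (intro mult_right_mono) auto

lemma rho_strict_mono:
  "lam1 / mu1 < lam2 / mu2 \<Longrightarrow> 0 \<le> v \<Longrightarrow> v < 1 \<Longrightarrow> rho F lam1 mu1 v < rho F lam2 mu2 v"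
  unfolding rho_eq using F_less_one[of v] by (intro mult_strict_right_mono) auto

lemma Ssum_ge_one: "0 \<le> lam / mu \<Longrightarrow> 1 \<le> K \<Longrightarrow> v \<in> {0..1} \<Longrightarrow> 1 \<le> Ssum F lam mu K v"
  unfolding Ssum_def by (intro sum_power_ge_one rho_nonneg)

lemma Ssum_continuous: "continuous_on {0..1} (Ssum F lam mu K)"
  unfolding Ssum_def rho_eq by (intro continuous_intros F_continuous)

lemma Ssum_mono:
  "0 \<le> lam1 / mu1 \<Longrightarrow> lam1 / mu1 \<le> lam2 / mu2 \<Longrightarrow> v \<in> {0..1}
    \<Longrightarrow> Ssum F lam1 mu1 K v \<le> Ssum F lam2 mu2 K v"
  unfolding Ssum_def by (intro sum_power_mono rho_nonneg rho_mono)

lemma Ssum_strict_mono: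
  "0 \<le> lam1 / mu1 \<Longrightarrow> lam1 / mu1 < lam2 / mu2 \<Longrightarrow> 2 \<le> K \<Longrightarrow> 0 \<le> v \<Longrightarrow> v < 1
    \<Longrightarrow> Ssum F lam1 mu1 K v < Ssum F lam2 mu2 K v"
  unfolding Ssum_def by (intro sum_power_strict_mono rho_nonneg rho_strict_mono) auto

lemma Jd_div_Ssum_eq: "(\<lambda>v. Jd v / Ssum F lam mu K v) = (\<lambda>v. Jd v * (1 / Ssum F lam mu K v))"
  by simp

lemma inverse_Ssum_continuous:
  assumes "0 \<le> lam / mu" "1 \<le> K" "0 \<le> a" "b \<le> 1"
  shows "continuous_on {a..b} (\<lambda>v. 1 / Ssum F lam mu K v)"
proof -
  have "Ssum F lam mu K v \<noteq> 0" if "v \<in> {a..b}" for v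
    using Ssum_ge_one[OF assms(1,2), of v] that assms(3,4) by simp
  then show ?thesis
    using assms(3,4) by (intro continuous_intros continuous_on_subset[OF Ssum_continuous]) auto
qed

lemma Jd_div_Ssum_integrable:
  assumes "0 \<le> lam / mu" "1 \<le> K" "0 \<le> a" "a \<le> b" "b \<le> 1"
  shows "(\<lambda>v. Jd v / Ssum F lam mu K v) integrable_on {a..b}"
  unfolding Jd_div_Ssum_eq
  using assms by (intro Jd_mult_integrable inverse_Ssum_continuous)

lemma integral_Jd_div_Ssum_nonneg:
  assumes "0 \<le> lam / mu" "1 \<le> K" "0 \<le> a" "a \<le> b" "b \<le> 1"
  shows "0 \<le> integral {a..b} (\<lambda>v. Jd v / Ssum F lam mu K v)"
  unfolding Jd_div_Ssum_eq
  using assms Ssum_ge_one[OF assms(1,2)]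
  by (intro integral_Jd_mult_nonneg inverse_Ssum_continuous) (auto intro: order_trans[OF zero_le_one])

lemma integral_Jd_div_Ssum_pos:
  assumes "0 \<le> lam / mu" "1 \<le> K" "0 \<le> a" "a < b" "b \<le> 1"
  shows "0 < integral {a..b} (\<lambda>v. Jd v / Ssum F lam mu K v)"
  unfolding Jd_div_Ssum_eq
  using assms Ssum_ge_one[OF assms(1,2)]
  by (intro integral_Jd_mult_pos inverse_Ssum_continuous) (auto intro: order_less_le_trans[OF zero_less_one])

lemma integral_Jd_div_Ssum_combine:
  assumes "0 \<le> lam / mu" "1 \<le> K" "0 \<le> a" "a \<le> c" "c \<le> b" "b \<le> 1"
  shows "integral {a..c} (\<lambda>v. Jd v / Ssum F lam mu K v) + integral {c..b} (\<lambda>v. Jd v / Ssum F lam mu K v)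
    = integral {a..b} (\<lambda>v. Jd v / Ssum F lam mu K v)"
  using assms by (intro Henstock_Kurzweil_Integration.integral_combine Jd_div_Ssum_integrable) auto

lemma integral_Jd_div_Ssum_subinterval:
  assumes "0 \<le> lam / mu" "1 \<le> K" "0 \<le> a" "a \<le> a'" "a' \<le> b'" "b' \<le> b" "b \<le> 1"
  shows "integral {a'..b'} (\<lambda>v. Jd v / Ssum F lam mu K v) \<le> integral {a..b} (\<lambda>v. Jd v / Ssum F lam mu K v)"
  using integral_Jd_div_Ssum_combine[OF assms(1,2), of a a' b] integral_Jd_div_Ssum_combine[OF assms(1,2), of a' b' b]
    integral_Jd_div_Ssum_nonneg[OF assms(1,2), of a a'] integral_Jd_div_Ssum_nonneg[OF assms(1,2), of b' b]
    assms by linarith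

lemma integral_Jd_div_Ssum_strict_mono:
  assumes "0 \<le> lam / mu" "1 \<le> K" "0 \<le> a" "a \<le> y" "y < x" "x \<le> 1"
  shows "integral {a..y} (\<lambda>v. Jd v / Ssum F lam mu K v) < integral {a..x} (\<lambda>v. Jd v / Ssum F lam mu K v)"
  using integral_Jd_div_Ssum_combine[OF assms(1,2), of a y x] integral_Jd_div_Ssum_pos[OF assms(1,2), of y x]
    assms by linarith

lemma integral_Jd_div_Ssum_antimono:
  assumes "0 \<le> lam1 / mu1" "lam1 / mu1 \<le> lam2 / mu2" "1 \<le> K" "0 \<le> a" "a \<le> b" "b \<le> 1"
  shows "integral {a..b} (\<lambda>v. Jd v / Ssum F lam2 mu2 K v) \<le> integral {a..b} (\<lambda>v. Jd v / Ssum F lam1 mu1 K v)"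
proof -
  have "0 \<le> lam2 / mu2"
    using assms(1,2) by linarith
  have "0 \<le> integral {a..b} (\<lambda>v. Jd v * (1 / Ssum F lam1 mu1 K v - 1 / Ssum F lam2 mu2 K v))"
  proof (rule integral_Jd_mult_nonneg)
    show "continuous_on {a..b} (\<lambda>v. 1 / Ssum F lam1 mu1 K v - 1 / Ssum F lam2 mu2 K v)"
      using assms \<open>0 \<le> lam2 / mu2\<close> by (intro continuous_on_diff inverse_Ssum_continuous)
    show "0 \<le> 1 / Ssum F lam1 mu1 K v - 1 / Ssum F lam2 mu2 K v" if "v \<in> {a..b}" for v
      using Ssum_mono[OF assms(1,2), of v K] Ssum_ge_one[OF assms(1,3), of v] that assms(4,6)
      by (simp add: frac_le)
  qed (use assms in auto)
  also have "\<dots> = integral {a..b} (\<lambda>v. Jd v / Ssum F lam1 mu1 K v) - integral {a..b} (\<lambda>v. Jd v / Ssum F lam2 mu2 K v)"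
    using Jd_div_Ssum_integrable[OF assms(1,3-6)] Jd_div_Ssum_integrable[OF \<open>0 \<le> lam2 / mu2\<close> assms(3-6)]
    by (simp add: right_diff_distrib integral_diff)
  finally show ?thesis
    by simp
qed

lemma integral_Jd_div_Ssum_strict_antimono:
  assumes "0 \<le> lam1 / mu1" "lam1 / mu1 < lam2 / mu2" "2 \<le> K" "0 \<le> a" "a < b" "b < 1"
  shows "integral {a..b} (\<lambda>v. Jd v / Ssum F lam2 mu2 K v) < integral {a..b} (\<lambda>v. Jd v / Ssum F lam1 mu1 K v)"
proof -
  have "0 \<le> lam2 / mu2" "1 \<le> K"
    using assms(1-3) by linarith+
  have "0 < integral {a..b} (\<lambda>v. Jd v * (1 / Ssum F lam1 mu1 K v - 1 / Ssum F lam2 mu2 K v))"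
  proof (rule integral_Jd_mult_pos)
    show "continuous_on {a..b} (\<lambda>v. 1 / Ssum F lam1 mu1 K v - 1 / Ssum F lam2 mu2 K v)"
      using assms \<open>0 \<le> lam2 / mu2\<close> \<open>1 \<le> K\<close> by (intro continuous_on_diff inverse_Ssum_continuous) auto
    show "0 < 1 / Ssum F lam1 mu1 K v - 1 / Ssum F lam2 mu2 K v" if "v \<in> {a..b}" for v
      using Ssum_strict_mono[OF assms(1-3), of v] Ssum_ge_one[OF assms(1) \<open>1 \<le> K\<close>, of v] that assms(4,6)
      by (simp add: frac_less2)
  qed (use assms in auto)
  also have "\<dots> = integral {a..b} (\<lambda>v. Jd v / Ssum F lam1 mu1 K v) - integral {a..b} (\<lambda>v. Jd v / Ssum F lam2 mu2 K v)"
    using Jd_div_Ssum_integrable[OF assms(1) \<open>1 \<le> K\<close>, of a b] Jd_div_Ssum_integrable[OF \<open>0 \<le> lam2 / mu2\<close> \<open>1 \<le> K\<close>, of a b]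
      assms by (simp add: right_diff_distrib integral_diff)
  finally show ?thesis
    by simp
qed

lemma vhat_one_spec:
  assumes "0 < c" "0 < mu" "vhat F f Jd c lam mu 1 < 1"
  shows "vhat F f Jd c lam mu 1 \<in> {0..1}" "Jfun F f (vhat F f Jd c lam mu 1) = c / mu"
proof -
  have "c / mu < 1"
    using assms(3) by (auto split: if_splits)
  moreover have "0 < c / mu"
    using assms(1,2) by simp
  ultimately have "\<exists>!x. x \<in> {0..1} \<and> Jfun F f x = c / mu"
    using J0 J_one by (intro strict_mono_on_continuous_ex1_preimage J_continuous Jmono) auto
  moreover have "vhat F f Jd c lam mu 1 = (THE x. x \<in> {0..1} \<and> Jfun F f x = c / mu)"
    using \<open>c / mu < 1\<close> by simp
  ultimately show "vhat F f Jd c lam mu 1 \<in> {0..1}" "Jfun F f (vhat F f Jd c lam mu 1) = c / mu"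
    using theI'[of "\<lambda>x. x \<in> {0..1} \<and> Jfun F f x = c / mu"] by auto
qed

lemma vhat_Suc_Suc_spec:
  assumes "0 < c" "0 \<le> lam / mu" "0 < mu" "vhat F f Jd c lam mu (Suc (Suc k)) < 1"
    and "0 \<le> vhat F f Jd c lam mu (Suc k)"
  shows "vhat F f Jd c lam mu (Suc k) < vhat F f Jd c lam mu (Suc (Suc k))"
    and "mu * integral {vhat F f Jd c lam mu (Suc k)..vhat F f Jd c lam mu (Suc (Suc k))}
      (\<lambda>v. Jd v / Ssum F lam mu (Suc (Suc k)) v) = c"
proof -
  define a where "a = vhat F f Jd c lam mu (Suc k)"
  define G where "G x = mu * integral {a..x} (\<lambda>v. Jd v / Ssum F lam mu (Suc (Suc k)) v)" for x
  have cond: "a < 1" "c \<le> G 1"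
    using assms(4) by (auto simp: Let_def a_def G_def split: if_splits)
  have vhat_eq: "vhat F f Jd c lam mu (Suc (Suc k)) = (THE x. x \<in> {a<..1} \<and> G x = c)"
    using cond by (simp add: Let_def a_def G_def)
  have "continuous_on {a..1} G"
    unfolding G_def using assms(2,5) cond(1)
    by (intro continuous_intros indefinite_integral_continuous_1 Jd_div_Ssum_integrable) (auto simp: a_def)
  moreover have "strict_mono_on {a..1} G"
    unfolding G_def using assms(2,3,5)
    by (intro strict_mono_onI mult_strict_left_mono integral_Jd_div_Ssum_strict_mono) (auto simp: a_def)
  moreover have "G a = 0"
    by (simp add: G_def)
  ultimately have "\<exists>!x. x \<in> {a..1} \<and> G x = c"
    using cond assms(1) by (intro strict_mono_on_continuous_ex1_preimage) auto
  then have "\<exists>!x. x \<in> {a<..1} \<and> G x = c"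
    using \<open>G a = 0\<close> assms(1) by (metis atLeastAtMost_iff greaterThanAtMost_iff less_imp_le order_less_le)
  then have "(THE x. x \<in> {a<..1} \<and> G x = c) \<in> {a<..1} \<and> G (THE x. x \<in> {a<..1} \<and> G x = c) = c"
    by (rule theI')
  then show "vhat F f Jd c lam mu (Suc k) < vhat F f Jd c lam mu (Suc (Suc k))"
    and "mu * integral {vhat F f Jd c lam mu (Suc k)..vhat F f Jd c lam mu (Suc (Suc k))}
      (\<lambda>v. Jd v / Ssum F lam mu (Suc (Suc k)) v) = c"
    unfolding vhat_eq by (simp_all add: a_def G_def)
qed

lemma vhat_nonneg:
  assumes "0 < c" "0 \<le> lam / mu" "0 < mu" "vhat F f Jd c lam mu (Suc k) < 1"
  shows "0 \<le> vhat F f Jd c lam mu (Suc k)"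
  using assms(4)
proof (induction k)
  case 0
  then show ?case
    using vhat_one_spec(1)[OF assms(1,3)] by simp
next
  case (Suc k)
  then have "0 \<le> vhat F f Jd c lam mu (Suc k)"
    using vhat_less_one_SucD by blast
  then show ?case
    using vhat_Suc_Suc_spec(1)[OF assms(1-3) Suc.prems] by linarith
qed

lemma threshold_step_mono:
  assumes ratio: "0 \<le> lam1 / mu1" "lam1 / mu1 \<le> lam2 / mu2" and cost: "c1 / mu1 \<le> c2 / mu2"
    and "0 < mu1" "0 < mu2" "2 \<le> K"
    and "0 \<le> a1" "a1 \<le> a2" "a1 < x1" "x1 < 1" "a2 < x2" "x2 < 1"
    and root1: "mu1 * integral {a1..x1} (\<lambda>v. Jd v / Ssum F lam1 mu1 K v) = c1"
    and root2: "mu2 * integral {a2..x2} (\<lambda>v. Jd v / Ssum F lam2 mu2 K v) = c2"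
  shows "x1 \<le> x2" and "c1 / mu1 < c2 / mu2 \<or> lam1 / mu1 < lam2 / mu2 \<Longrightarrow> x1 < x2"
proof -
  let ?H1 = "\<lambda>v. Jd v / Ssum F lam1 mu1 K v" and ?H2 = "\<lambda>v. Jd v / Ssum F lam2 mu2 K v"
  have "0 \<le> lam2 / mu2" "1 \<le> K"
    using ratio \<open>2 \<le> K\<close> by linarith+
  have I1: "integral {a1..x1} ?H1 = c1 / mu1" and I2: "integral {a2..x2} ?H2 = c2 / mu2"
    using root1 root2 \<open>0 < mu1\<close> \<open>0 < mu2\<close> by (auto simp: field_simps)
  have weight: "integral {a1..x1} ?H2 \<le> integral {a1..x1} ?H1"
    using assms by (intro integral_Jd_div_Ssum_antimono) auto
  show "x1 \<le> x2"
  proof (rule ccontr)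
    assume "\<not> x1 \<le> x2"
    then have "integral {a2..x2} ?H2 \<le> integral {a1..x2} ?H2"
      using assms \<open>0 \<le> lam2 / mu2\<close> \<open>1 \<le> K\<close> by (intro integral_Jd_div_Ssum_subinterval) auto
    also have "\<dots> < integral {a1..x1} ?H2"
      using assms \<open>0 \<le> lam2 / mu2\<close> \<open>1 \<le> K\<close> \<open>\<not> x1 \<le> x2\<close>
      by (intro integral_Jd_div_Ssum_strict_mono) auto
    finally show False
      using weight I1 I2 cost by linarith
  qed
  assume strict: "c1 / mu1 < c2 / mu2 \<or> lam1 / mu1 < lam2 / mu2"
  show "x1 < x2"
  proof (rule ccontr)
    assume "\<not> x1 < x2"
    then have "integral {a2..x2} ?H2 \<le> integral {a1..x1} ?H2"
      using assms \<open>0 \<le> lam2 / mu2\<close> \<open>1 \<le> K\<close> by (intro integral_Jd_div_Ssum_subinterval) auto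
    moreover have "lam1 / mu1 < lam2 / mu2 \<Longrightarrow> integral {a1..x1} ?H2 < integral {a1..x1} ?H1"
      using assms by (intro integral_Jd_div_Ssum_strict_antimono) auto
    ultimately show False
      using strict weight I1 I2 cost by linarith
  qed
qed

lemma vhat_mono:
  assumes "0 < c1" "0 < c2" "0 < mu1" "0 < mu2"
    and ratio: "0 \<le> lam1 / mu1" "lam1 / mu1 \<le> lam2 / mu2" and cost: "c1 / mu1 \<le> c2 / mu2"
  shows "vhat F f Jd c1 lam1 mu1 (Suc k) < 1 \<Longrightarrow> vhat F f Jd c2 lam2 mu2 (Suc k) < 1 \<Longrightarrow>
    vhat F f Jd c1 lam1 mu1 (Suc k) \<le> vhat F f Jd c2 lam2 mu2 (Suc k) \<and>
    (c1 / mu1 < c2 / mu2 \<or> (1 \<le> k \<and> lam1 / mu1 < lam2 / mu2)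
      \<longrightarrow> vhat F f Jd c1 lam1 mu1 (Suc k) < vhat F f Jd c2 lam2 mu2 (Suc k))"
proof (induction k)
  case 0
  let ?v1 = "vhat F f Jd c1 lam1 mu1 1" and ?v2 = "vhat F f Jd c2 lam2 mu2 1"
  have "?v1 \<in> {0..1}" "?v2 \<in> {0..1}" "Jfun F f ?v1 = c1 / mu1" "Jfun F f ?v2 = c2 / mu2"
    using vhat_one_spec assms(1-4) 0 by simp_all
  then have "?v1 < ?v2 \<longleftrightarrow> c1 / mu1 < c2 / mu2" "?v2 < ?v1 \<longleftrightarrow> c2 / mu2 < c1 / mu1"
    using J_less_iff by metis+
  then show ?case
    using cost by auto
next
  case (Suc k)
  have "0 \<le> lam2 / mu2"
    using ratio by linarith
  let ?a1 = "vhat F f Jd c1 lam1 mu1 (Suc k)" and ?a2 = "vhat F f Jd c2 lam2 mu2 (Suc k)"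
  have "?a1 < 1" "?a2 < 1"
    using Suc.prems by (auto intro: vhat_less_one_SucD)
  then have "?a1 \<le> ?a2"
    using Suc.IH by blast
  have "0 \<le> ?a1" "0 \<le> ?a2"
    using vhat_nonneg assms(1-4) ratio(1) \<open>0 \<le> lam2 / mu2\<close> \<open>?a1 < 1\<close> \<open>?a2 < 1\<close> by blast+
  note spec1 = vhat_Suc_Suc_spec[OF assms(1) ratio(1) assms(3) Suc.prems(1) \<open>0 \<le> ?a1\<close>]
  note spec2 = vhat_Suc_Suc_spec[OF assms(2) \<open>0 \<le> lam2 / mu2\<close> assms(4) Suc.prems(2) \<open>0 \<le> ?a2\<close>]
  show ?case
    using threshold_step_mono[OF ratio cost assms(3,4) _ \<open>0 \<le> ?a1\<close> \<open>?a1 \<le> ?a2\<close>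
        spec1(1) Suc.prems(1) spec2(1) Suc.prems(2) spec1(2) spec2(2)]
    by auto
qed

lemma vhat_strict_mono:
  assumes "0 < c1" "0 < c2" "0 < mu1" "0 < mu2"
    and "0 \<le> lam1 / mu1" "lam1 / mu1 \<le> lam2 / mu2" "c1 / mu1 \<le> c2 / mu2"
    and "c1 / mu1 < c2 / mu2 \<or> (2 \<le> k \<and> lam1 / mu1 < lam2 / mu2)"
    and "1 \<le> k" "k \<le> Kstar F f Jd c1 lam1 mu1" "k \<le> Kstar F f Jd c2 lam2 mu2"
  shows "vhat F f Jd c1 lam1 mu1 k < vhat F f Jd c2 lam2 mu2 k"
proof -
  obtain k' where "k = Suc k'"
    using \<open>1 \<le> k\<close> by (cases k) auto
  then show ?thesis
    using vhat_mono[OF assms(1-7), of k'] vhat_less_one_if_le_Kstar assms(8-11) by auto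
qed

end

theorem proposition1:
  fixes F f Jd :: "real \<Rightarrow> real"
  assumes F0: "F 0 = 0" and F1: "F 1 = 1"
    and dens: "\<forall>x\<in>{0..1}. (F has_real_derivative f x) (at x within {0..1})"
    and fpos: "\<forall>x\<in>{0..1}. f x > 0"
    and fac: "abs_continuous_on_interval 0 1 f"
    and Jmono: "strict_mono_on {0..1} (Jfun F f)"
    and J0: "Jfun F f 0 < 0"
    and Jd: "AE x in lborel. x \<in> {0..1} \<longrightarrow> (Jfun F f has_real_derivative Jd x) (at x)"
  shows
    "(\<forall>k\<ge>2. \<forall>lam mu c1 c2. lam > 0 \<and> mu > 0 \<and> 0 < c1 \<and> c1 < c2
          \<and> k \<le> Kstar F f Jd c1 lam mu \<and> k \<le> Kstar F f Jd c2 lam mu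
          \<longrightarrow> vhat F f Jd c1 lam mu k < vhat F f Jd c2 lam mu k)
   \<and> (\<forall>k\<ge>2. \<forall>c mu lam1 lam2. c > 0 \<and> mu > 0 \<and> 0 < lam1 \<and> lam1 < lam2
          \<and> k \<le> Kstar F f Jd c lam1 mu \<and> k \<le> Kstar F f Jd c lam2 mu
          \<longrightarrow> vhat F f Jd c lam1 mu k < vhat F f Jd c lam2 mu k)
   \<and> (\<forall>k\<ge>2. \<forall>c lam mu1 mu2. c > 0 \<and> lam > 0 \<and> 0 < mu1 \<and> mu1 < mu2
          \<and> k \<le> Kstar F f Jd c lam mu1 \<and> k \<le> Kstar F f Jd c lam mu2
          \<longrightarrow> vhat F f Jd c lam mu1 k > vhat F f Jd c lam mu2 k)
   \<and> (\<forall>lam mu c1 c2. lam > 0 \<and> mu > 0 \<and> 0 < c1 \<and> c1 < c2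
          \<and> 1 \<le> Kstar F f Jd c1 lam mu \<and> 1 \<le> Kstar F f Jd c2 lam mu
          \<longrightarrow> vhat F f Jd c1 lam mu 1 < vhat F f Jd c2 lam mu 1)
   \<and> (\<forall>c lam mu1 mu2. c > 0 \<and> lam > 0 \<and> 0 < mu1 \<and> mu1 < mu2
          \<and> 1 \<le> Kstar F f Jd c lam mu1 \<and> 1 \<le> Kstar F f Jd c lam mu2
          \<longrightarrow> vhat F f Jd c lam mu1 1 > vhat F f Jd c lam mu2 1)
   \<and> (\<forall>c mu lam1 lam2. c > 0 \<and> mu > 0 \<and> lam1 > 0 \<and> lam2 > 0
          \<and> 1 \<le> Kstar F f Jd c lam1 mu \<and> 1 \<le> Kstar F f Jd c lam2 mu
          \<longrightarrow> vhat F f Jd c lam1 mu 1 = vhat F f Jd c lam2 mu 1)"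
proof -
  interpret regular_value_distribution F f Jd
    using assms by unfold_locales
  have cost_mono: "vhat F f Jd c1 lam mu k < vhat F f Jd c2 lam mu k"
    if "1 \<le> k" "0 < lam" "0 < mu" "0 < c1" "c1 < c2"
      "k \<le> Kstar F f Jd c1 lam mu" "k \<le> Kstar F f Jd c2 lam mu" for k lam mu c1 c2
    using that by (intro vhat_strict_mono) (auto simp: divide_right_mono divide_strict_right_mono)
  have arrival_mono: "vhat F f Jd c lam1 mu k < vhat F f Jd c lam2 mu k"
    if "2 \<le> k" "0 < c" "0 < mu" "0 < lam1" "lam1 < lam2"
      "k \<le> Kstar F f Jd c lam1 mu" "k \<le> Kstar F f Jd c lam2 mu" for k c mu lam1 lam2
    using that by (intro vhat_strict_mono) (auto simp: divide_right_mono divide_strict_right_mono)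
  have supply_antimono: "vhat F f Jd c lam mu2 k < vhat F f Jd c lam mu1 k"
    if "1 \<le> k" "0 < c" "0 < lam" "0 < mu1" "mu1 < mu2"
      "k \<le> Kstar F f Jd c lam mu1" "k \<le> Kstar F f Jd c lam mu2" for k c lam mu1 mu2
    using that by (intro vhat_strict_mono) (auto simp: frac_less2 frac_le)
  have arrival_indep: "vhat F f Jd c lam1 mu 1 = vhat F f Jd c lam2 mu 1" for c mu lam1 lam2
    by simp
  show ?thesis
    using cost_mono arrival_mono supply_antimono arrival_indep by (auto simp del: vhat.simps)
qed

end
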